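(* Let $q$ be a power of an odd prime $p$ and let $\chi$ be a non-trivial multiplicative character of $\mathbb{F}_q$. Then for any subsets $A,B \subseteq \mathbb{F}_q$, $$\bigg|\sum_{a\in A,\, b\in B}\chi(a+b)\bigg| \leq \sqrt{q|A||B|}\Big(1-\frac{|A|}{q}\Big)^{1/2}\Big(1-\frac{|B|}{q}\Big)^{1/2}.$$
   Context: Multiplicative characters of $\mathbb{F}_q$ are homomorphisms $\mathbb{F}_q^*\to\mathbb{C}^*$, extended by $\chi(0)=0$. *)

theory Defs
  imports "HOL-Analysis.Analysis"
begin

definition mult_char :: "('a::{field,finite} \<Rightarrow> complex) \<Rightarrow> bool" where
  "mult_char chr \<longleftrightarrow> chr 0 = 0
     \<and> (\<forall>x. x \<noteq> 0 \<longrightarrow> chr x \<noteq> 0)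
     \<and> (\<forall>x y. x \<noteq> 0 \<longrightarrow> y \<noteq> 0 \<longrightarrow> chr (x * y) = chr x * chr y)"

definition nontrivial_char :: "('a::{field,finite} \<Rightarrow> complex) \<Rightarrow> bool" where
  "nontrivial_char chr \<longleftrightarrow> (\<exists>x. x \<noteq> 0 \<and> chr x \<noteq> 1)"

end

theory Submission
  imports Defs
begin

(* Write the indicators of A and B as 1_A = |A|/q + u and 1_B = |B|/q + v. Every row and column
   sum of the kernel chr (a + b) vanishes, so the sum equals sum_a u(a) w(a) with
   w(a) = sum_b v(b) chr (a + b), and Cauchy-Schwarz bounds it by |u| |w|. Here
   |u|^2 = |A| (1 - |A|/q), and since the correlation sum_x chr (x + d) cnj (chr x) is q - 1 for
   d = 0 and -1 otherwise, |w|^2 = q |v|^2 - (sum v)^2 = q |B| (1 - |B|/q). *)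

lemma mult_char_mult:
  assumes "mult_char chr" shows "chr (x * y) = chr x * chr y"
  using assms unfolding mult_char_def by (cases "x = 0 \<or> y = 0") auto

lemma mult_char_eq_0_iff:
  assumes "mult_char chr" shows "chr x = 0 \<longleftrightarrow> x = 0"
  using assms unfolding mult_char_def by auto

lemma mult_char_one:
  assumes "mult_char chr" shows "chr 1 = 1"
  using mult_char_mult[OF assms, of 1 1] mult_char_eq_0_iff[OF assms, of 1] by simp

lemma mult_char_power_card_minus_1:
  fixes chr :: "'a::{field,finite} \<Rightarrow> complex"
  assumes "mult_char chr" and "x \<noteq> 0"
  shows "chr x ^ (CARD('a) - 1) = 1"
proof -
  let ?U = "UNIV - {0::'a}"
  have "(\<Prod>y\<in>?U. chr (x * y)) = (\<Prod>y\<in>?U. chr y)"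
    using \<open>x \<noteq> 0\<close>
    by (intro prod.reindex_bij_betw bij_betwI[where g = "\<lambda>y. inverse x * y"]) auto
  moreover have "(\<Prod>y\<in>?U. chr (x * y)) = chr x ^ (CARD('a) - 1) * (\<Prod>y\<in>?U. chr y)"
    by (simp add: mult_char_mult[OF assms(1)] prod.distrib card_Diff_singleton)
  moreover have "(\<Prod>y\<in>?U. chr y) \<noteq> 0"
    by (simp add: mult_char_eq_0_iff[OF assms(1)])
  ultimately show ?thesis by simp
qed

lemma norm_mult_char:
  fixes chr :: "'a::{field,finite} \<Rightarrow> complex"
  assumes "mult_char chr" and "x \<noteq> 0"
  shows "norm (chr x) = 1"
proof -
  have "CARD('a) - 1 > 0"
    using card_mono[of "UNIV :: 'a set" "{0, 1}"] by simp
  moreover have "norm (chr x) ^ (CARD('a) - 1) = 1"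
    by (metis norm_power norm_one mult_char_power_card_minus_1[OF assms])
  ultimately show ?thesis
    by (metis norm_ge_zero power_one power_eq_iff_eq_base zero_le_one)
qed

lemma cnj_mult_char:
  assumes "mult_char chr" shows "cnj (chr x) = chr (inverse x)"
proof (cases "x = 0")
  case True
  then show ?thesis using assms unfolding mult_char_def by simp
next
  case False
  have "chr x * chr (inverse x) = 1"
    using False by (simp flip: mult_char_mult[OF assms] add: mult_char_one[OF assms])
  then show ?thesis
    using norm_mult_char[OF assms False]
    by (metis divide_conv_cnj mult_1 nonzero_mult_div_cancel_left zero_neq_one mult_zero_left)
qed

lemma sum_mult_char_eq_0:
  fixes chr :: "'a::{field,finite} \<Rightarrow> complex"
  assumes "mult_char chr" and "nontrivial_char chr"
  shows "(\<Sum>x\<in>UNIV. chr x) = 0"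
proof -
  obtain g where g: "g \<noteq> 0" "chr g \<noteq> 1"
    using assms(2) unfolding nontrivial_char_def by blast
  have "(\<Sum>x\<in>UNIV. chr x) = (\<Sum>x\<in>UNIV. chr (g * x))"
    using g(1)
    by (intro sum.reindex_bij_betw[symmetric] bij_betwI[where g = "\<lambda>y. inverse g * y"]) auto
  also have "\<dots> = chr g * (\<Sum>x\<in>UNIV. chr x)"
    by (simp add: mult_char_mult[OF assms(1)] sum_distrib_left)
  finally show ?thesis
    using g(2) by (metis mult_cancel_right1 mult.commute)
qed

lemma sum_mult_char_shift_eq_0:
  fixes chr :: "'a::{field,finite} \<Rightarrow> complex"
  assumes "mult_char chr" and "nontrivial_char chr"
  shows "(\<Sum>x\<in>UNIV. chr (x + b)) = 0"
  using sum.reindex_bij_betw[OF bij_plus_right, of chr b] sum_mult_char_eq_0[OF assms] by simp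

lemma sum_mult_char_shift_mult_cnj:
  fixes chr :: "'a::{field,finite} \<Rightarrow> complex"
  assumes "mult_char chr" and "nontrivial_char chr"
  shows "(\<Sum>x\<in>UNIV. chr (x + d) * cnj (chr x)) = (if d = 0 then of_nat CARD('a) else 0) - 1"
proof -
  \<comment> \<open>Since \<open>inverse 0 = 0\<close>, the formula below is off by exactly \<open>chr 1 = 1\<close> at \<open>x = 0\<close>.\<close>
  have summand: "chr (x + d) * cnj (chr x) = chr (1 + d * inverse x) - (if x = 0 then 1 else 0)"
    for x
  proof (cases "x = 0")
    case True
    then show ?thesis using assms(1) by (simp add: mult_char_one mult_char_eq_0_iff)
  next
    case False
    then have "(x + d) * inverse x = 1 + d * inverse x" by (simp add: field_simps)
    then show ?thesis
      using False by (simp add: cnj_mult_char[OF assms(1)] flip: mult_char_mult[OF assms(1)])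
  qed
  have "(\<Sum>x\<in>UNIV. chr (1 + d * inverse x)) = (if d = 0 then of_nat CARD('a) else 0)"
  proof (cases "d = 0")
    case True
    then show ?thesis by (simp add: mult_char_one[OF assms(1)])
  next
    case False
    have "bij (\<lambda>x. 1 + d * inverse x)"
      using False by (intro bij_betwI[where g = "\<lambda>y. inverse (inverse d * (y - 1))"])
        (auto simp: mult.assoc[symmetric])
    then show ?thesis
      using False sum.reindex_bij_betw[of _ UNIV UNIV chr] sum_mult_char_eq_0[OF assms] by simp
  qed
  then show ?thesis by (simp add: summand sum_subtractf)
qed

lemma sum_norm_sum_mult_char_shift_square:
  fixes chr :: "'a::{field,finite} \<Rightarrow> complex" and v :: "'a \<Rightarrow> real"
  assumes "mult_char chr" and "nontrivial_char chr"
  shows "(\<Sum>a\<in>UNIV. (norm (\<Sum>b\<in>UNIV. of_real (v b) * chr (a + b)))\<^sup>2)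
    = real CARD('a) * (\<Sum>b\<in>UNIV. (v b)\<^sup>2) - (\<Sum>b\<in>UNIV. v b)\<^sup>2"
proof -
  have correlation: "(\<Sum>a\<in>UNIV. chr (a + b) * cnj (chr (a + b')))
      = (if b = b' then of_nat CARD('a) else 0) - 1" for b b'
  proof -
    have "(\<Sum>a\<in>UNIV. chr (a + b) * cnj (chr (a + b')))
        = (\<Sum>a\<in>UNIV. chr ((a + b') + (b - b')) * cnj (chr (a + b')))"
      by (simp add: algebra_simps)
    also have "\<dots> = (\<Sum>x\<in>UNIV. chr (x + (b - b')) * cnj (chr x))"
      by (rule sum.reindex_bij_betw[OF bij_plus_right])
    finally show ?thesis
      using sum_mult_char_shift_mult_cnj[OF assms, of "b - b'"] by simp
  qed
  define w where "w a = (\<Sum>b\<in>UNIV. of_real (v b) * chr (a + b))" for a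
  have "complex_of_real (\<Sum>a\<in>UNIV. (norm (w a))\<^sup>2) = (\<Sum>a\<in>UNIV. w a * cnj (w a))"
    unfolding of_real_sum complex_norm_square ..
  also have "\<dots> = (\<Sum>a\<in>UNIV. \<Sum>b\<in>UNIV. \<Sum>b'\<in>UNIV.
      of_real (v b * v b') * (chr (a + b) * cnj (chr (a + b'))))"
    by (simp add: w_def sum_product mult_ac)
  also have "\<dots> = (\<Sum>b\<in>UNIV. \<Sum>b'\<in>UNIV. \<Sum>a\<in>UNIV.
      of_real (v b * v b') * (chr (a + b) * cnj (chr (a + b'))))"
    by (subst sum.swap) (rule sum.cong[OF refl sum.swap])
  also have "\<dots> = (\<Sum>b\<in>UNIV. \<Sum>b'\<in>UNIV.
      of_real (v b * v b') * ((if b = b' then of_nat CARD('a) else 0) - 1))"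
    by (simp add: correlation flip: sum_distrib_left)
  also have "\<dots> = of_real (real CARD('a) * (\<Sum>b\<in>UNIV. (v b)\<^sup>2) - (\<Sum>b\<in>UNIV. v b)\<^sup>2)"
  proof -
    have summand: "of_real (v b * v b') * ((if b = b' then of_nat CARD('a) else 0) - 1)
        = (if b = b' then of_real (real CARD('a) * (v b)\<^sup>2) else 0) - of_real (v b * v b')"
      for b b' :: 'a
      by (simp add: power2_eq_square algebra_simps)
    show ?thesis
      by (simp only: summand)
        (simp add: sum_subtractf sum_distrib_left sum_distrib_right power2_eq_square mult.commute)
  qed
  finally show ?thesis
    unfolding w_def of_real_eq_iff .
qed

lemma sum_diff_const_mult_eq:
  fixes f K :: "'a \<Rightarrow> 'b::comm_ring"
  assumes "sum K S = 0"
  shows "(\<Sum>x\<in>S. (f x - c) * K x) = (\<Sum>x\<in>S. f x * K x)"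
  using assms by (simp add: left_diff_distrib sum_subtractf flip: sum_distrib_left)

lemma sum_centered_indicator:
  fixes A :: "'a::finite set"
  shows "(\<Sum>x\<in>UNIV. indicator A x - real (card A) / real CARD('a)) = 0"
  by (simp add: sum_subtractf indicator_def)

lemma sum_centered_indicator_square:
  fixes A :: "'a::finite set"
  shows "(\<Sum>x\<in>UNIV. (indicator A x - real (card A) / real CARD('a))\<^sup>2)
    = real (card A) * (1 - real (card A) / real CARD('a))"
proof -
  define \<alpha> where "\<alpha> = real (card A) / real CARD('a)"
  have "(indicator A x - \<alpha>)\<^sup>2 = (1 - 2 * \<alpha>) * indicator A x + \<alpha>\<^sup>2" for x
    by (simp add: indicator_def power2_eq_square algebra_simps)
  then have "(\<Sum>x\<in>UNIV. (indicator A x - \<alpha>)\<^sup>2) = (1 - 2 * \<alpha>) * card A + CARD('a) * \<alpha>\<^sup>2"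
    by (simp add: sum.distrib indicator_def flip: sum_distrib_left)
  then show ?thesis
    unfolding \<alpha>_def by (simp add: field_simps power2_eq_square)
qed

lemma sum_sum_eq_sum_centered_indicators:
  fixes K :: "'a \<Rightarrow> 'b \<Rightarrow> 'c::comm_ring_1"
  assumes "finite S" and "finite T" and "A \<subseteq> S" and "B \<subseteq> T"
    and "\<And>a. (\<Sum>b\<in>T. K a b) = 0" and "\<And>b. (\<Sum>a\<in>S. K a b) = 0"
  shows "(\<Sum>a\<in>A. \<Sum>b\<in>B. K a b)
    = (\<Sum>a\<in>S. (indicator A a - \<alpha>) * (\<Sum>b\<in>T. (indicator B b - \<beta>) * K a b))"
proof -
  have "(\<Sum>a\<in>S. \<Sum>b\<in>T. indicator B b * K a b) = 0"
    by (subst sum.swap) (simp add: assms(6) flip: sum_distrib_left)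
  then have "(\<Sum>a\<in>S. (indicator A a - \<alpha>) * (\<Sum>b\<in>T. indicator B b * K a b))
      = (\<Sum>a\<in>S. indicator A a * (\<Sum>b\<in>T. indicator B b * K a b))"
    by (rule sum_diff_const_mult_eq)
  also have "\<dots> = (\<Sum>a\<in>A. \<Sum>b\<in>B. K a b)"
    using assms(1-4)
    by (simp add: indicator_def sum_of_bool_mult_eq Int_absorb1 Int_absorb2 flip: Collect_conj_eq)
  finally show ?thesis
    by (simp only: sum_diff_const_mult_eq[OF assms(5)])
qed

lemma norm_sum_of_real_mult_le_L2_set:
  fixes u :: "'a \<Rightarrow> real" and w :: "'a \<Rightarrow> complex"
  shows "norm (\<Sum>x\<in>S. of_real (u x) * w x) \<le> L2_set u S * L2_set (\<lambda>x. norm (w x)) S"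
proof -
  have "norm (\<Sum>x\<in>S. of_real (u x) * w x) \<le> (\<Sum>x\<in>S. \<bar>u x\<bar> * \<bar>norm (w x)\<bar>)"
    by (rule order.trans[OF norm_sum]) (simp add: norm_mult)
  also have "\<dots> \<le> L2_set u S * L2_set (\<lambda>x. norm (w x)) S"
    by (rule L2_set_mult_ineq)
  finally show ?thesis .
qed

theorem theorem1p14:
  fixes chr :: "'a::{field,finite} \<Rightarrow> complex"
    and p k :: nat
    and A B :: "'a set"
  assumes "prime p" and "odd p" and "CARD('a) = p ^ k"
    and "mult_char chr" and "nontrivial_char chr"
  shows "norm (\<Sum>a\<in>A. \<Sum>b\<in>B. chr (a + b))
    \<le> sqrt (real CARD('a) * real (card A) * real (card B))
       * sqrt (1 - real (card A) / real CARD('a))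
       * sqrt (1 - real (card B) / real CARD('a))"
proof -
  define q where "q = real CARD('a)"
  define u where "u a = indicator A a - real (card A) / q" for a
  define v where "v b = indicator B b - real (card B) / q" for b
  define w where "w a = (\<Sum>b\<in>UNIV. of_real (v b) * chr (a + b))" for a
  have "(\<Sum>a\<in>A. \<Sum>b\<in>B. chr (a + b)) = (\<Sum>a\<in>UNIV. of_real (u a) * w a)"
    using sum_sum_eq_sum_centered_indicators[of UNIV UNIV A B "\<lambda>a b. chr (a + b)"
        "of_real (real (card A) / q)" "of_real (real (card B) / q)"]
      sum_mult_char_shift_eq_0[OF assms(4,5)]
    by (simp add: u_def v_def w_def of_real_indicator add.commute[of _ "_ :: 'a"])
  then have "norm (\<Sum>a\<in>A. \<Sum>b\<in>B. chr (a + b))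
      \<le> L2_set u UNIV * L2_set (\<lambda>a. norm (w a)) UNIV"
    using norm_sum_of_real_mult_le_L2_set by metis
  also have "L2_set u UNIV = sqrt (real (card A) * (1 - real (card A) / q))"
    unfolding L2_set_def u_def q_def sum_centered_indicator_square ..
  also have "L2_set (\<lambda>a. norm (w a)) UNIV
      = sqrt (q * (real (card B) * (1 - real (card B) / q)))"
    unfolding L2_set_def w_def sum_norm_sum_mult_char_shift_square[OF assms(4,5)]
    unfolding v_def q_def sum_centered_indicator sum_centered_indicator_square by simp
  finally show ?thesis
    unfolding q_def by (simp add: real_sqrt_mult mult_ac)
qed

end
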